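(* Let $0<q<1/2$, $p=1-q$ and $z\ge1$ an integer. Define $$P(z)=1-\sum_{k=0}^{z-1}\left(p^zq^k-q^zp^k\right)\binom{k+z-1}{k},\qquad P_{SN}(z)=1-\sum_{k=0}^{z-1}e^{-zq/p}\frac{(zq/p)^k}{k!}\left(1-\left(\frac qp\right)^{z-k}\right),$$ and for $\kappa>0$ $$P(z,\kappa)=1-\sum_{k=0}^{z-1}\left(1-\left(\frac qp\right)^{z-k}\right)\frac{\mu^k}{k!}e^{-\mu},\qquad \mu=\kappa z\frac qp.$$ Then $P_{SN}(z)=P(z,1)$ and $$P(z)=\int_0^{+\infty}P(z,\kappa)\,d\rho_z(\kappa),\qquad d\rho_z(\kappa)=\frac{z^z}{(z-1)!}\kappa^{z-1}e^{-z\kappa}\,d\kappa.$$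
   Context: $P(z)$ is the exact probability of success of a double-spend attack (attacker relative hash power $q$, honest $p$) after $z$ confirmations; $P_{SN}(z)$ is Nakamoto's approximation of it; $P(z,\kappa)$ is the success probability conditional on the $z$ honest blocks having taken $\kappa$ times their expected total time. *)

theory Defs
  imports "HOL-Analysis.Analysis"
begin

text \<open>Exact double-spend success probability after z confirmations.\<close>
definition P_exact :: "real \<Rightarrow> nat \<Rightarrow> real" where
  "P_exact q z = (let p = 1 - q in
     1 - (\<Sum>k<z. (p ^ z * q ^ k - q ^ z * p ^ k) * real ((k + z - 1) choose k)))"

text \<open>Nakamoto's approximation.\<close>
definition P_SN :: "real \<Rightarrow> nat \<Rightarrow> real" where
  "P_SN q z = (let p = 1 - q in
     1 - (\<Sum>k<z. exp (- (real z * q / p)) * (real z * q / p) ^ k / fact k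
                   * (1 - (q / p) ^ (z - k))))"

definition P_kappa :: "real \<Rightarrow> nat \<Rightarrow> real \<Rightarrow> real" where
  "P_kappa q z \<kappa> = (let p = 1 - q; \<mu> = \<kappa> * real z * q / p in
     1 - (\<Sum>k<z. (1 - (q / p) ^ (z - k)) * \<mu> ^ k / fact k * exp (- \<mu>)))"

definition rho_dens :: "nat \<Rightarrow> real \<Rightarrow> real" where
  "rho_dens z \<kappa> = real z ^ z / fact (z - 1) * \<kappa> ^ (z - 1) * exp (- real z * \<kappa>)"

end

theory Submission imports Defs "HOL-Probability.Probability" begin

text \<open>Conditionally on the relative time \<open>\<kappa>\<close>, the attacker's progress is Poisson with
  mean \<open>\<mu> = \<kappa> z q/p\<close>, and \<open>\<rho>\<^sub>z\<close> is a Gamma law. Mixing a Poisson law over a Gamma law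
  gives a negative binomial law, whose weights \<open>binom(k+z-1,k) p\<^sup>z q\<^sup>k\<close> are exactly the ones
  appearing in \<open>P(z)\<close>; integrating \<open>P(z,\<kappa>)\<close> term by term against \<open>\<rho>\<^sub>z\<close> therefore gives
  \<open>P(z)\<close>.\<close>

lemma has_integral_power_mult_exp:
  fixes l :: real and k :: nat
  assumes "0 < l"
  shows "((\<lambda>x. x ^ k * exp (- l * x)) has_integral fact k / l ^ Suc k) {0<..}"
proof -
  have "(erlang_density k l has_integral 1) UNIV"
    using nn_integral_erlang_ith_moment[OF assms, of k 0]
    by (intro nn_integral_has_integral) (auto simp: assms less_imp_le)
  then have "((\<lambda>x. l ^ Suc k / fact k * (x ^ k * exp (- l * x))) has_integral 1) {0<..}"
    apply (subst has_integral_restrict_UNIV[symmetric])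
    apply (rule has_integral_spike_finite[of "{0}", rotated 2], assumption)
    by (auto simp: erlang_density_def)
  from has_integral_mult_right[OF this, of "fact k / l ^ Suc k"] assms
  show ?thesis by simp
qed

lemma rho_dens_has_integral_1:
  assumes "1 \<le> z"
  shows "(rho_dens z has_integral 1) {0<..}"
proof -
  have "((\<lambda>\<kappa>. real z ^ z / fact (z - 1) * (\<kappa> ^ (z - 1) * exp (- real z * \<kappa>)))
          has_integral real z ^ z / fact (z - 1) * (fact (z - 1) / real z ^ Suc (z - 1))) {0<..}"
    using assms by (intro has_integral_mult_right has_integral_power_mult_exp) simp
  then show ?thesis
    using assms unfolding rho_dens_def by (simp add: mult.assoc)
qed

lemma poisson_gamma_mixture_has_integral:
  fixes r :: real
  assumes "1 \<le> z" and "0 \<le> r"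
  shows "((\<lambda>\<kappa>. (\<kappa> * real z * r) ^ k / fact k * exp (- (\<kappa> * real z * r)) * rho_dens z \<kappa>)
           has_integral real ((k + z - 1) choose k) * r ^ k / (1 + r) ^ (z + k)) {0<..}"
proof -
  define L where "L = real z * (1 + r)"
  have "0 < L" using assms by (simp add: L_def add_pos_nonneg)
  define c where "c = (real z * r) ^ k / fact k * (real z ^ z / fact (z - 1))"
  have integrand: "(\<kappa> * real z * r) ^ k / fact k * exp (- (\<kappa> * real z * r)) * rho_dens z \<kappa>
      = c * (\<kappa> ^ (z - 1 + k) * exp (- L * \<kappa>))" for \<kappa>
  proof -
    have "exp (- L * \<kappa>) = exp (- (\<kappa> * real z * r)) * exp (- real z * \<kappa>)"
      unfolding exp_add[symmetric] by (simp add: L_def algebra_simps)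
    then show ?thesis
      unfolding c_def rho_dens_def by (simp add: power_add power_mult_distrib)
  qed
  have "fact (z - 1 + k) = fact k * fact (z - 1) * real ((k + z - 1) choose k)"
  proof -
    have "k + z - 1 - k = z - 1" "k + z - 1 = z - 1 + k" using assms by auto
    with binomial_fact_lemma[of k "k + z - 1"]
    have "fact k * fact (z - 1) * ((k + z - 1) choose k) = (fact (z - 1 + k) :: nat)" by simp
    then show ?thesis by (metis of_nat_fact of_nat_mult)
  qed
  moreover have "Suc (z - 1 + k) = z + k" using assms by simp
  ultimately have "c * (fact (z - 1 + k) / L ^ Suc (z - 1 + k))
      = real z ^ (z + k) * r ^ k * real ((k + z - 1) choose k) / (real z ^ (z + k) * (1 + r) ^ (z + k))"
    unfolding c_def L_def using assms by (auto simp: power_add power_mult_distrib)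
  also have "\<dots> = real ((k + z - 1) choose k) * r ^ k / (1 + r) ^ (z + k)"
    using assms by (auto simp: field_simps)
  finally have closed_form: "c * (fact (z - 1 + k) / L ^ Suc (z - 1 + k))
      = real ((k + z - 1) choose k) * r ^ k / (1 + r) ^ (z + k)" .
  have "((\<lambda>\<kappa>. c * (\<kappa> ^ (z - 1 + k) * exp (- L * \<kappa>)))
      has_integral c * (fact (z - 1 + k) / L ^ Suc (z - 1 + k))) {0<..}"
    by (intro has_integral_mult_right has_integral_power_mult_exp \<open>0 < L\<close>)
  then show ?thesis
    unfolding integrand closed_form .
qed

lemma P_SN_eq_P_kappa_1: "P_SN q z = P_kappa q z 1"
  unfolding P_SN_def P_kappa_def Let_def
  by (intro arg_cong[where f="\<lambda>x. 1 - x"] sum.cong) auto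

lemma P_kappa_mult_rho_dens:
  "P_kappa q z \<kappa> * rho_dens z \<kappa> = rho_dens z \<kappa> - (\<Sum>k<z. (1 - (q / (1 - q)) ^ (z - k)) *
     ((\<kappa> * real z * (q / (1 - q))) ^ k / fact k * exp (- (\<kappa> * real z * (q / (1 - q)))) * rho_dens z \<kappa>))"
  unfolding P_kappa_def Let_def left_diff_distrib mult_1 sum_distrib_right
  by (intro arg_cong[where f="\<lambda>x. rho_dens z \<kappa> - x"] sum.cong refl)
    (simp add: algebra_simps diff_divide_distrib)

lemma negative_binomial_weight_eq:
  fixes q :: real
  assumes "q < 1" and "k < z"
  shows "(1 - (q / (1 - q)) ^ (z - k)) * ((q / (1 - q)) ^ k / (1 + q / (1 - q)) ^ (z + k))
    = (1 - q) ^ z * q ^ k - q ^ z * (1 - q) ^ k"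
proof -
  define p where "p = 1 - q"
  have p: "0 < p" using assms by (simp add: p_def)
  have "1 + q / p = 1 / p" using p by (simp add: p_def field_simps)
  then have head: "(q / p) ^ k / (1 + q / p) ^ (z + k) = p ^ z * q ^ k"
    using p by (simp add: power_add power_divide)
  have "p ^ z = p ^ k * p ^ (z - k)" and "q ^ z = q ^ k * q ^ (z - k)"
    using assms by (simp_all add: power_add[symmetric])
  then have tail: "(q / p) ^ (z - k) * (p ^ z * q ^ k) = q ^ z * p ^ k"
    using p by (simp add: power_divide)
  show ?thesis
    unfolding p_def[symmetric] left_diff_distrib head tail by simp
qed

theorem mainTheorem6:
  fixes q :: real and z :: nat
  assumes "0 < q" and "q < 1/2" and "1 \<le> z"
  shows "P_SN q z = P_kappa q z 1
    \<and> ((\<lambda>\<kappa>. P_kappa q z \<kappa> * rho_dens z \<kappa>) has_integral P_exact q z) {0<..}"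
proof
  show "P_SN q z = P_kappa q z 1" by (rule P_SN_eq_P_kappa_1)
  define r where "r = q / (1 - q)"
  have "0 \<le> r" using assms by (simp add: r_def)
  have "((\<lambda>\<kappa>. P_kappa q z \<kappa> * rho_dens z \<kappa>) has_integral
          1 - (\<Sum>k<z. (1 - r ^ (z - k)) * (real ((k + z - 1) choose k) * r ^ k / (1 + r) ^ (z + k))))
        {0<..}"
    unfolding P_kappa_mult_rho_dens r_def[symmetric]
    using \<open>0 \<le> r\<close> assms
    by (intro has_integral_diff rho_dens_has_integral_1 has_integral_sum finite_lessThan
          has_integral_mult_right poisson_gamma_mixture_has_integral)
  also have "1 - (\<Sum>k<z. (1 - r ^ (z - k)) * (real ((k + z - 1) choose k) * r ^ k / (1 + r) ^ (z + k)))
      = P_exact q z"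
    unfolding P_exact_def Let_def r_def using assms
    by (intro arg_cong[where f="\<lambda>x. 1 - x"] sum.cong refl)
      (simp add: negative_binomial_weight_eq[symmetric])
  finally show "((\<lambda>\<kappa>. P_kappa q z \<kappa> * rho_dens z \<kappa>) has_integral P_exact q z) {0<..}" .
qed

end
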